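(* Consider a Utility Maximization problem in the MPOI world with ground set $J$, downward-closed constraints $\mathcal{F}\subseteq 2^J$, semiadditive objective $f(I,x)=\sum_{i\in I}x_i+h(I)$, and Markov systems $(S_i)_{i\in J}$ with non-negative destination values. Let $\mathrm{OPT}$ be the utility of an optimal strategy. Then $$\mathrm{OPT}\le \mathbb{E}_{\sigma}\Big[\max_{I\in\mathcal{F}} f\big(I,Y(\sigma)\big)\Big],$$ where $\sigma=(\sigma_i)_{i\in J}$ is a random trajectory profile in which each $S_i$ is run independently from $s_i$ until it reaches a destination state, and $Y(\sigma)=(Y(\sigma_i))_{i\in J}$ is the vector of prevailing costs.
   Context: A Markov system $S=(V,P,s,T,\pi,r)$ consists of a Markov chain on a finite state space $V$ with transition matrix $P=(p_{u,v})$, a starting state $s$, a set $T\subseteq V$ of absorbing destination states, prices $\pi^u\ge0$ for $u\in V\setminus T$, and values $r^t\in\mathbb{R}$ for $t\in T$; every state reaches some destination state. MPOI game / Utility Maximization: each $S_i$ starts at $s_i$; at each step the player either advances some $S_i$ from its current non-destination state $u$, paying $\pi_i^u$ (the state then moves randomly according to $P_i$), or ends the game by selecting a set $I\in\mathcal{F}$ of ready elements (elements whose Markov system is in a destination state). $\mathcal{F}$ is downward-closed and all values are non-negative. The utility of an adaptive strategy is $\mathbb{E}[f(I,(r_i^{\mathrm{dest}(\sigma_i)})_{i\in I})-\text{total price paid}]$, where $\mathrm{dest}(\sigma_i)$ is the destination state reached by $S_i$. Grade: for a Markov system $S$ and $\tau\in\mathbb{R}$, the $\tau$-penalized game from state $v$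 is: at each move the player may Halt (game ends) or Play; Play at a non-destination state $v$ pays $\pi^v$ and moves according to $P$; Play at a destination state $v$ gives the player $r^v-\tau$ and ends the game. Let $U^v(\tau)$ be the optimal expected (value minus price) starting from $v$. The grade of $v$ is $\tau^v=\sup\{\tau\in\mathbb{R}: U^v(\tau)>0\}$; $\tau_i^v$ denotes the grade of $v$ in $S_i$. Prevailing cost: for a trajectory $\sigma_i$ of $S_i$, $Y(\sigma_i)=\min_{v\in\sigma_i}\tau_i^v$. *)

theory Defs
  imports "HOL-Probability.Probability"
begin

(* A family of Markov systems (S_i), i in J, is given by
   V i  : state space,  P i : transition kernel (u \<mapsto> distribution of next state),
   s i  : start state,   T i : destination states,
   pr i : prices,        r i : values of destination states. *)

(* A (deterministic, adaptive) strategy for the tau-penalized game decides, given the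
   history of visited states (the last element is the current state), whether to Play (True)
   or Halt (False).  pen_val ... n h is the expected (value minus price) of the strategy when
   the game is additionally halted after at most n moves. *)
fun pen_val :: "('s \<Rightarrow> 's pmf) \<Rightarrow> 's set \<Rightarrow> ('s \<Rightarrow> real) \<Rightarrow> ('s \<Rightarrow> real) \<Rightarrow> real
      \<Rightarrow> ('s list \<Rightarrow> bool) \<Rightarrow> nat \<Rightarrow> 's list \<Rightarrow> real" where
  "pen_val P T pr r \<tau> \<sigma> 0 h = 0"
| "pen_val P T pr r \<tau> \<sigma> (Suc n) h =
     (if \<not> \<sigma> h then 0
      else if last h \<in> T then r (last h) - \<tau>
      else - pr (last h) + measure_pmf.expectation (P (last h)) (\<lambda>w. pen_val P T pr r \<tau> \<sigma> n (h @ [w])))"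

definition pen_opt :: "('s \<Rightarrow> 's pmf) \<Rightarrow> 's set \<Rightarrow> ('s \<Rightarrow> real) \<Rightarrow> ('s \<Rightarrow> real) \<Rightarrow> 's \<Rightarrow> real \<Rightarrow> real" where
  "pen_opt P T pr r v \<tau> = Sup {pen_val P T pr r \<tau> \<sigma> n [v] | \<sigma> n. True}"

definition grade :: "('s \<Rightarrow> 's pmf) \<Rightarrow> 's set \<Rightarrow> ('s \<Rightarrow> real) \<Rightarrow> ('s \<Rightarrow> real) \<Rightarrow> 's \<Rightarrow> real" where
  "grade P T pr r v = Sup {\<tau>. pen_opt P T pr r v \<tau> > 0}"

fun path_prob :: "('s \<Rightarrow> 's pmf) \<Rightarrow> 's set \<Rightarrow> 's list \<Rightarrow> real" where
  "path_prob P T [] = 0"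
| "path_prob P T [u] = (if u \<in> T then 1 else 0)"
| "path_prob P T (u # v # xs) = (if u \<in> T then 0 else pmf (P u) v * path_prob P T (v # xs))"

definition traj :: "('s \<Rightarrow> 's pmf) \<Rightarrow> 's set \<Rightarrow> 's \<Rightarrow> 's list pmf" where
  "traj P T s0 = embed_pmf (\<lambda>xs. if xs \<noteq> [] \<and> hd xs = s0 then path_prob P T xs else 0)"

definition prevailing_cost :: "('s \<Rightarrow> 's pmf) \<Rightarrow> 's set \<Rightarrow> ('s \<Rightarrow> real) \<Rightarrow> ('s \<Rightarrow> real) \<Rightarrow> 's list \<Rightarrow> real" where
  "prevailing_cost P T pr r xs = Min (grade P T pr r ` set xs)"

datatype 'j action = Advance 'j | Select "'j set"

(* A deterministic adaptive strategy maps the history of state profiles (last = current) to an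
   action.  mpoi_valid: the strategy only takes legal actions and ends the game within n
   advancing steps on every possible run. *)
fun mpoi_valid :: "'j set \<Rightarrow> 'j set set \<Rightarrow> ('j \<Rightarrow> 's \<Rightarrow> 's pmf) \<Rightarrow> ('j \<Rightarrow> 's set)
      \<Rightarrow> (('j \<Rightarrow> 's) list \<Rightarrow> 'j action) \<Rightarrow> nat \<Rightarrow> ('j \<Rightarrow> 's) list \<Rightarrow> bool" where
  "mpoi_valid J F P T \<sigma> 0 h =
     (case \<sigma> h of Select I \<Rightarrow> I \<in> F \<and> (\<forall>i\<in>I. last h i \<in> T i) | Advance i \<Rightarrow> False)"
| "mpoi_valid J F P T \<sigma> (Suc n) h =
     (case \<sigma> h of Select I \<Rightarrow> I \<in> F \<and> (\<forall>i\<in>I. last h i \<in> T i)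
      | Advance i \<Rightarrow> i \<in> J \<and> last h i \<notin> T i \<and>
          (\<forall>w\<in>set_pmf (P i (last h i)). mpoi_valid J F P T \<sigma> n (h @ [(last h)(i := w)])))"

(* expected utility  f(I, values) - total price  of the strategy (for valid strategies),
   with semiadditive objective f(I,x) = (sum_{i in I} x_i) + hf I *)
fun mpoi_util :: "('j set \<Rightarrow> real) \<Rightarrow> ('j \<Rightarrow> 's \<Rightarrow> 's pmf) \<Rightarrow> ('j \<Rightarrow> 's \<Rightarrow> real) \<Rightarrow> ('j \<Rightarrow> 's \<Rightarrow> real)
      \<Rightarrow> (('j \<Rightarrow> 's) list \<Rightarrow> 'j action) \<Rightarrow> nat \<Rightarrow> ('j \<Rightarrow> 's) list \<Rightarrow> real" where
  "mpoi_util hf P pr r \<sigma> 0 h =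
     (case \<sigma> h of Select I \<Rightarrow> (\<Sum>i\<in>I. r i (last h i)) + hf I | Advance i \<Rightarrow> 0)"
| "mpoi_util hf P pr r \<sigma> (Suc n) h =
     (case \<sigma> h of Select I \<Rightarrow> (\<Sum>i\<in>I. r i (last h i)) + hf I
      | Advance i \<Rightarrow> - pr i (last h i) + measure_pmf.expectation (P i (last h i))
            (\<lambda>w. mpoi_util hf P pr r \<sigma> n (h @ [(last h)(i := w)])))"

definition mpoi_opt :: "'j set \<Rightarrow> 'j set set \<Rightarrow> ('j set \<Rightarrow> real) \<Rightarrow> ('j \<Rightarrow> 's \<Rightarrow> 's pmf)
      \<Rightarrow> ('j \<Rightarrow> 's) \<Rightarrow> ('j \<Rightarrow> 's set) \<Rightarrow> ('j \<Rightarrow> 's \<Rightarrow> real) \<Rightarrow> ('j \<Rightarrow> 's \<Rightarrow> real) \<Rightarrow> real" where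
  "mpoi_opt J F hf P s T pr r =
     Sup {mpoi_util hf P pr r \<sigma> n [s] | \<sigma> n. mpoi_valid J F P T \<sigma> n [s]}"

definition markov_system :: "'s set \<Rightarrow> ('s \<Rightarrow> 's pmf) \<Rightarrow> 's \<Rightarrow> 's set \<Rightarrow> ('s \<Rightarrow> real) \<Rightarrow> ('s \<Rightarrow> real) \<Rightarrow> bool" where
  "markov_system V P s0 T pr r \<longleftrightarrow>
     finite V \<and> s0 \<in> V \<and> T \<subseteq> V \<and>
     (\<forall>u\<in>V. set_pmf (P u) \<subseteq> V) \<and>
     (\<forall>t\<in>T. P t = return_pmf t) \<and>
     (\<forall>u\<in>V - T. pr u \<ge> 0) \<and>
     (\<forall>u\<in>V. \<exists>t\<in>T. (u, t) \<in> {(a, b). b \<in> set_pmf (P a)}\<^sup>*)"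

end

theory Submission
  imports Defs
begin

text \<open>
  Write \<open>U\<^sub>i(v, \<tau>)\<close> for the value of the \<open>\<tau>\<close>-penalized game of \<open>S\<^sub>i\<close> from \<open>v\<close>. For a state
  profile \<open>u\<close> and thresholds \<open>\<kappa>\<^sub>j \<le> \<tau>\<^sub>j(u\<^sub>j)\<close> consider the potential
  \<open>\<Phi>(u, \<kappa>) = E[max\<^sub>I f(I, min(\<kappa>, Y(\<sigma>)))] + \<Sum>\<^sub>j U\<^sub>j(u\<^sub>j, \<kappa>\<^sub>j)\<close>, the expectation being over
  independent trajectories \<open>\<sigma>\<close> started in \<open>u\<close>. When \<open>S\<^sub>i\<close> moves to \<open>w\<close> and \<open>\<kappa>\<^sub>i\<close> is lowered to
  \<open>min(\<kappa>\<^sub>i, \<tau>\<^sub>i(w))\<close>, the first term is a martingale, and the Bellman inequality of the penalized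
  game together with \<open>U\<^sub>i(w, \<tau>\<^sub>i(w)) \<le> 0\<close> shows that the second one increases in expectation by
  at most the price paid. When a set \<open>I\<close> of ready elements is selected, \<open>U\<^sub>i(t, \<kappa>\<^sub>i) \<ge> r\<^sub>i(t) - \<kappa>\<^sub>i\<close>
  shows that \<open>\<Phi>\<close> dominates the value obtained. So no strategy earns more than \<open>\<Phi>(s, \<tau>(s))\<close>,
  and \<open>U\<^sub>i(s\<^sub>i, \<tau>\<^sub>i(s\<^sub>i)) \<le> 0\<close> bounds this by the claimed expectation.
\<close>

section \<open>Expectations over discrete distributions\<close>

lemma pmf_expectation_mono_finite:
  fixes f g :: "'a \<Rightarrow> real"
  assumes "finite (set_pmf p)" "\<And>x. x \<in> set_pmf p \<Longrightarrow> f x \<le> g x"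
  shows "measure_pmf.expectation p f \<le> measure_pmf.expectation p g"
  using assms
  by (intro integral_mono_AE) (auto simp: AE_measure_pmf_iff intro: integrable_measure_pmf_finite)

lemma pmf_expectation_le_const_finite:
  fixes f :: "'a \<Rightarrow> real"
  assumes "finite (set_pmf p)" "\<And>x. x \<in> set_pmf p \<Longrightarrow> f x \<le> c"
  shows "measure_pmf.expectation p f \<le> c"
  using pmf_expectation_mono_finite[of p f "\<lambda>_. c"] assms by simp

lemma pmf_expectation_add_finite:
  fixes f g :: "'a \<Rightarrow> real"
  assumes "finite (set_pmf p)"
  shows "measure_pmf.expectation p (\<lambda>x. f x + g x) =
    measure_pmf.expectation p f + measure_pmf.expectation p g"
  using assms by (intro Bochner_Integration.integral_add) (auto intro: integrable_measure_pmf_finite)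

lemma integrable_measure_pmf_bounded:
  fixes f :: "'a \<Rightarrow> real"
  assumes "\<And>x. \<bar>f x\<bar> \<le> B"
  shows "integrable (measure_pmf p) f"
  using assms by (intro measure_pmf.integrable_const_bound[where B=B]) auto

lemma pmf_expectation_abs_le:
  fixes f :: "'a \<Rightarrow> real"
  assumes "\<And>x. \<bar>f x\<bar> \<le> B"
  shows "\<bar>measure_pmf.expectation p f\<bar> \<le> B"
proof -
  have "integrable (measure_pmf p) f"
    using assms by (rule integrable_measure_pmf_bounded)
  moreover have "- B \<le> f x" "f x \<le> B" for x
    using assms[of x] by auto
  ultimately have "measure_pmf.expectation p (\<lambda>_. - B) \<le> measure_pmf.expectation p f"
    "measure_pmf.expectation p f \<le> measure_pmf.expectation p (\<lambda>_. B)"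
    by (intro integral_mono; simp)+
  then show ?thesis by (simp add: abs_le_iff)
qed

lemma pmf_expectation_bind_bounded:
  fixes f :: "'b \<Rightarrow> real"
  assumes "\<And>x. \<bar>f x\<bar> \<le> B"
  shows "measure_pmf.expectation (bind_pmf M N) f =
    measure_pmf.expectation M (\<lambda>x. measure_pmf.expectation (N x) f)"
  unfolding measure_pmf_bind
  by (rule integral_bind[where K="count_space UNIV" and B=B and B'=1])
    (use assms in \<open>auto simp: measure_pmf.emeasure_space_1 space_subprob_algebra
       measure_pmf.subprob_space_axioms\<close>)

lemma Pi_pmf_remove_bind:
  assumes "finite J" "i \<in> J"
  shows "Pi_pmf J d p = bind_pmf (p i) (\<lambda>y. map_pmf (\<lambda>f. f(i := y)) (Pi_pmf (J - {i}) d p))"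
proof -
  have "Pi_pmf J d p = Pi_pmf (insert i (J - {i})) d p"
    using assms by (simp add: insert_absorb)
  also have "\<dots> = do {y \<leftarrow> p i; f \<leftarrow> Pi_pmf (J - {i}) d p; return_pmf (f(i := y))}"
    using assms by (intro Pi_pmf_insert') auto
  finally show ?thesis by (simp add: map_pmf_def)
qed

lemma pmf_expectation_Pi_pmf_remove:
  fixes H :: "_ \<Rightarrow> real"
  assumes "finite J" "i \<in> J" "\<And>\<sigma>. \<bar>H \<sigma>\<bar> \<le> B"
  shows "measure_pmf.expectation (Pi_pmf J d p) H =
    measure_pmf.expectation (p i)
      (\<lambda>y. measure_pmf.expectation (Pi_pmf (J - {i}) d p) (\<lambda>f. H (f(i := y))))"
  unfolding Pi_pmf_remove_bind[OF assms(1,2)]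
  by (subst pmf_expectation_bind_bounded[where B=B]) (use assms in auto)

lemma set_Pi_pmf_memberD:
  "finite J \<Longrightarrow> \<sigma> \<in> set_pmf (Pi_pmf J d p) \<Longrightarrow> j \<in> J \<Longrightarrow> \<sigma> j \<in> set_pmf (p j)"
  using set_Pi_pmf[of J d p] by (auto simp: PiE_dflt_def)

lemma pmf_average_eq_min:
  fixes f :: "'a \<Rightarrow> real"
  assumes fin: "finite (set_pmf p)" and ge: "\<And>x. x \<in> set_pmf p \<Longrightarrow> m \<le> f x"
    and avg: "(\<Sum>x\<in>set_pmf p. pmf p x * f x) = m" and w: "w \<in> set_pmf p"
  shows "f w = m"
proof -
  have "(\<Sum>x\<in>set_pmf p. pmf p x * (f x - m)) =
      (\<Sum>x\<in>set_pmf p. pmf p x * f x) - m * (\<Sum>x\<in>set_pmf p. pmf p x)"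
    by (simp add: algebra_simps sum_subtractf sum_distrib_left)
  also have "\<dots> = 0"
    using avg sum_pmf_eq_1[OF fin order_refl] by simp
  finally have "\<forall>x\<in>set_pmf p. pmf p x * (f x - m) = 0"
    using ge by (subst sum_nonneg_eq_0_iff[OF fin, symmetric]) auto
  then show ?thesis
    using w by (auto simp: set_pmf_iff)
qed

lemma nn_integral_count_space_Cons:
  fixes f :: "'a list \<Rightarrow> ennreal"
  assumes "\<And>xs. (\<forall>ys. xs \<noteq> u # ys) \<Longrightarrow> f xs = 0"
  shows "(\<integral>\<^sup>+ xs. f xs \<partial>count_space UNIV) = (\<integral>\<^sup>+ ys. f (u # ys) \<partial>count_space UNIV)"
proof -
  have "bij_betw (Cons u) UNIV (range (Cons u))"
    by (auto simp: bij_betw_def inj_on_def)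
  then have "(\<integral>\<^sup>+ ys. f (u # ys) \<partial>count_space UNIV) =
      (\<integral>\<^sup>+ xs. f xs \<partial>count_space (range (Cons u)))"
    by (rule nn_integral_bij_count_space)
  also have "\<dots> = (\<integral>\<^sup>+ xs. f xs * indicator (range (Cons u)) xs \<partial>count_space UNIV)"
    by (rule nn_integral_count_space_indicator) simp
  also have "\<dots> = (\<integral>\<^sup>+ xs. f xs \<partial>count_space UNIV)"
    using assms by (intro nn_integral_cong) (auto simp: indicator_def)
  finally show ?thesis by simp
qed

section \<open>The penalized game\<close>

lemma pen_val_Cons_history:
  "h \<noteq> [] \<Longrightarrow> (\<forall>ys. \<sigma> (x # h @ ys) = \<sigma>' (h @ ys)) \<Longrightarrow>
   pen_val P T pr r \<tau> \<sigma> n (x # h) = pen_val P T pr r \<tau> \<sigma>' n h"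
proof (induction n arbitrary: h)
  case (Suc n)
  have "pen_val P T pr r \<tau> \<sigma> n (x # h @ [w]) = pen_val P T pr r \<tau> \<sigma>' n (h @ [w])" for w
    using Suc.prems by (intro Suc.IH) auto
  moreover have "\<sigma> (x # h) = \<sigma>' h"
    using Suc.prems(2)[rule_format, of "[]"] by simp
  ultimately show ?case using Suc.prems by simp
qed simp

lemma pen_val_truncate:
  "length h + n = c \<Longrightarrow> n \<le> N \<Longrightarrow>
   pen_val P T pr r \<tau> (\<lambda>h. \<sigma> h \<and> length h < c) N h = pen_val P T pr r \<tau> \<sigma> n h"
proof (induction n arbitrary: h N)
  case 0
  then show ?case by (cases N) auto
next
  case (Suc n)
  then obtain N' where N: "N = Suc N'" "n \<le> N'"
    by (cases N) auto
  have "pen_val P T pr r \<tau> (\<lambda>h. \<sigma> h \<and> length h < c) N' (h @ [w]) = pen_val P T pr r \<tau> \<sigma> n (h @ [w])"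
    for w using Suc.prems N by (intro Suc.IH) auto
  then show ?case using Suc.prems N by simp
qed

text \<open>
  Cutting each strategy \<open>sg w\<close> off after its own horizon \<open>ng w\<close> lets all of them run under the
  common horizon \<open>Max (ng ` W)\<close>.
\<close>
lemma pen_val_combine:
  assumes "finite W"
  obtains \<sigma> N where "\<sigma> [u]"
    "\<And>w. w \<in> W \<Longrightarrow> pen_val P T pr r \<tau> \<sigma> N [u, w] = pen_val P T pr r \<tau> (sg w) (ng w) [w]"
proof -
  define \<sigma> where "\<sigma> h =
    (case h of _ # w # rest \<Rightarrow> sg w (w # rest) \<and> length (w # rest) < 1 + ng w | _ \<Rightarrow> True)" for h
  define N where "N = Max (ng ` W)"
  have "\<sigma> [u]"
    by (simp add: \<sigma>_def)
  moreover have "pen_val P T pr r \<tau> \<sigma> N [u, w] = pen_val P T pr r \<tau> (sg w) (ng w) [w]" if "w \<in> W" for w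
  proof -
    have "pen_val P T pr r \<tau> \<sigma> N (u # [w]) =
        pen_val P T pr r \<tau> (\<lambda>h. sg w h \<and> length h < 1 + ng w) N [w]"
      by (rule pen_val_Cons_history) (auto simp: \<sigma>_def)
    also have "\<dots> = pen_val P T pr r \<tau> (sg w) (ng w) [w]"
      using assms that by (intro pen_val_truncate) (auto simp: N_def)
    finally show ?thesis by simp
  qed
  ultimately show thesis by (rule that)
qed

locale markov_sys =
  fixes V :: "'s set" and P :: "'s \<Rightarrow> 's pmf" and T :: "'s set"
    and pr :: "'s \<Rightarrow> real" and r :: "'s \<Rightarrow> real"
  assumes finite_V: "finite V" and T_subset_V: "T \<subseteq> V"
    and P_closed: "\<And>u. u \<in> V \<Longrightarrow> set_pmf (P u) \<subseteq> V"
    and price_nonneg: "\<And>u. u \<in> V - T \<Longrightarrow> pr u \<ge> 0"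
    and reaches_T: "\<And>u. u \<in> V \<Longrightarrow> \<exists>t\<in>T. (u, t) \<in> {(a, b). b \<in> set_pmf (P a)}\<^sup>*"
begin

abbreviation U :: "'s \<Rightarrow> real \<Rightarrow> real" where
  "U v \<tau> \<equiv> pen_opt P T pr r v \<tau>"

abbreviation g :: "'s \<Rightarrow> real" where
  "g v \<equiv> grade P T pr r v"

lemma finite_set_pmf_P: "u \<in> V \<Longrightarrow> finite (set_pmf (P u))"
  using P_closed finite_V finite_subset by blast

lemma pen_val_le_max_value:
  "last h \<in> V \<Longrightarrow> pen_val P T pr r \<tau> \<sigma> n h \<le> max 0 (Max (r ` T) - \<tau>)"
proof (induction n arbitrary: h)
  case (Suc n)
  show ?case
  proof (cases "\<sigma> h \<and> last h \<notin> T")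
    case True
    have "measure_pmf.expectation (P (last h)) (\<lambda>w. pen_val P T pr r \<tau> \<sigma> n (h @ [w]))
        \<le> max 0 (Max (r ` T) - \<tau>)"
      using Suc.prems P_closed
      by (intro pmf_expectation_le_const_finite finite_set_pmf_P Suc.IH) auto
    moreover have "pr (last h) \<ge> 0"
      using price_nonneg Suc.prems True by auto
    ultimately show ?thesis using True by simp
  next
    case False
    have "last h \<in> T \<Longrightarrow> r (last h) \<le> Max (r ` T)"
      using T_subset_V finite_V by (intro Max_ge) (auto intro: finite_subset)
    with False show ?thesis by (auto simp: max_def)
  qed
qed simp

lemma pen_val_penalty_lipschitz:
  "last h \<in> V \<Longrightarrow> \<tau> \<le> \<tau>' \<Longrightarrow>
   pen_val P T pr r \<tau> \<sigma> n h \<le> pen_val P T pr r \<tau>' \<sigma> n h + (\<tau>' - \<tau>)"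
proof (induction n arbitrary: h)
  case (Suc n)
  show ?case
  proof (cases "\<sigma> h \<and> last h \<notin> T")
    case True
    have fin: "finite (set_pmf (P (last h)))"
      using Suc.prems by (intro finite_set_pmf_P)
    have "measure_pmf.expectation (P (last h)) (\<lambda>w. pen_val P T pr r \<tau> \<sigma> n (h @ [w])) \<le>
        measure_pmf.expectation (P (last h)) (\<lambda>w. pen_val P T pr r \<tau>' \<sigma> n (h @ [w]) + (\<tau>' - \<tau>))"
      using Suc.prems P_closed by (intro pmf_expectation_mono_finite fin Suc.IH) auto
    also have "\<dots> = measure_pmf.expectation (P (last h)) (\<lambda>w. pen_val P T pr r \<tau>' \<sigma> n (h @ [w]))
        + (\<tau>' - \<tau>)"
      using fin by (subst pmf_expectation_add_finite) auto
    finally show ?thesis using True by simp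
  qed (use Suc.prems in auto)
qed simp

lemma pen_val_le_pen_opt: "v \<in> V \<Longrightarrow> pen_val P T pr r \<tau> \<sigma> n [v] \<le> U v \<tau>"
  unfolding pen_opt_def using pen_val_le_max_value[of "[v]"]
  by (intro cSup_upper bdd_aboveI[where M="max 0 (Max (r ` T) - \<tau>)"]) auto

lemma pen_opt_le: "(\<And>\<sigma> n. pen_val P T pr r \<tau> \<sigma> n [v] \<le> c) \<Longrightarrow> U v \<tau> \<le> c"
  unfolding pen_opt_def by (rule cSup_least) auto

lemma pen_opt_nonneg: "v \<in> V \<Longrightarrow> U v \<tau> \<ge> 0"
  using pen_val_le_pen_opt[of v \<tau> "\<lambda>_. False" 1] by simp

lemma pen_opt_destination: "t \<in> T \<Longrightarrow> U t \<tau> \<ge> r t - \<tau>"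
  using pen_val_le_pen_opt[of t \<tau> "\<lambda>_. True" 1] T_subset_V by auto

lemma pen_opt_nonpos_above_grade:
  assumes "v \<in> V" "\<tau> > g v"
  shows "U v \<tau> \<le> 0"
proof (rule ccontr)
  assume "\<not> U v \<tau> \<le> 0"
  moreover have "bdd_above {\<tau>. U v \<tau> > 0}"
  proof (rule bdd_aboveI)
    fix \<tau>' assume "\<tau>' \<in> {\<tau>. U v \<tau> > 0}"
    moreover have "U v \<tau>' \<le> 0" if "\<tau>' \<ge> Max (r ` T)"
      using that assms(1) by (intro pen_opt_le order_trans[OF pen_val_le_max_value]) auto
    ultimately show "\<tau>' \<le> Max (r ` T)" by force
  qed
  ultimately have "\<tau> \<le> g v"
    unfolding grade_def by (intro cSup_upper) auto
  with assms show False by simp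
qed

lemma pen_opt_grade_nonpos:
  assumes "v \<in> V"
  shows "U v (g v) \<le> 0"
proof (rule field_le_epsilon)
  fix e :: real assume "0 < e"
  have "U v (g v) \<le> U v (g v + e) + e"
  proof (rule pen_opt_le)
    fix \<sigma> n
    show "pen_val P T pr r (g v) \<sigma> n [v] \<le> U v (g v + e) + e"
      using pen_val_penalty_lipschitz[of "[v]" "g v" "g v + e" \<sigma> n]
        pen_val_le_pen_opt[of v "g v + e" \<sigma> n] assms \<open>0 < e\<close> by simp
  qed
  also have "U v (g v + e) \<le> 0"
    using pen_opt_nonpos_above_grade[OF assms] \<open>0 < e\<close> by simp
  finally show "U v (g v) \<le> 0 + e" by simp
qed

lemma pen_opt_bellman:
  assumes u: "u \<in> V" "u \<notin> T"
  shows "- pr u + measure_pmf.expectation (P u) (\<lambda>w. U w \<kappa>) \<le> U u \<kappa>"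
proof (rule field_le_epsilon)
  fix e :: real assume "0 < e"
  have "\<exists>\<sigma> n. U w \<kappa> - e < pen_val P T pr r \<kappa> \<sigma> n [w]" for w
  proof -
    have "U w \<kappa> - e < Sup {pen_val P T pr r \<kappa> \<sigma> n [w] | \<sigma> n. True}"
      using \<open>0 < e\<close> by (simp add: pen_opt_def)
    then show ?thesis by (rule less_cSupE) auto
  qed
  then obtain sg ng where sg: "\<And>w. U w \<kappa> - e < pen_val P T pr r \<kappa> (sg w) (ng w) [w]"
    by metis
  have fin: "finite (set_pmf (P u))"
    using u(1) by (rule finite_set_pmf_P)
  obtain \<sigma> N where \<sigma>: "\<sigma> [u]"
    "\<And>w. w \<in> set_pmf (P u) \<Longrightarrow> pen_val P T pr r \<kappa> \<sigma> N [u, w] = pen_val P T pr r \<kappa> (sg w) (ng w) [w]"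
    using pen_val_combine[OF fin] by metis
  have "measure_pmf.expectation (P u) (\<lambda>w. U w \<kappa>) - e
      = measure_pmf.expectation (P u) (\<lambda>w. U w \<kappa> - e)"
    using fin by (simp add: Bochner_Integration.integral_diff integrable_measure_pmf_finite)
  also have "\<dots> \<le> measure_pmf.expectation (P u) (\<lambda>w. pen_val P T pr r \<kappa> \<sigma> N [u, w])"
    using sg \<sigma>(2) fin by (intro pmf_expectation_mono_finite) (auto simp: less_imp_le)
  finally have "- pr u + measure_pmf.expectation (P u) (\<lambda>w. U w \<kappa>) - e
      \<le> pen_val P T pr r \<kappa> \<sigma> (Suc N) [u]"
    using u \<sigma>(1) by simp
  also have "\<dots> \<le> U u \<kappa>"
    using u by (intro pen_val_le_pen_opt)
  finally show "- pr u + measure_pmf.expectation (P u) (\<lambda>w. U w \<kappa>) \<le> U u \<kappa> + e" by simp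
qed

lemma pen_opt_bellman_grade:
  assumes u: "u \<in> V" "u \<notin> T"
  shows "- pr u + measure_pmf.expectation (P u) (\<lambda>w. U w (min \<kappa> (g w))) \<le> U u \<kappa>"
proof -
  have "U w (min \<kappa> (g w)) \<le> U w \<kappa>" if "w \<in> set_pmf (P u)" for w
  proof -
    have "w \<in> V" using P_closed u that by blast
    then show ?thesis
      using pen_opt_grade_nonpos[of w] pen_opt_nonneg[of w \<kappa>] by (auto simp: min_def)
  qed
  then have "measure_pmf.expectation (P u) (\<lambda>w. U w (min \<kappa> (g w)))
      \<le> measure_pmf.expectation (P u) (\<lambda>w. U w \<kappa>)"
    using u by (intro pmf_expectation_mono_finite finite_set_pmf_P) auto
  then show ?thesis using pen_opt_bellman[OF u, of \<kappa>] by simp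
qed

end

section \<open>Trajectories run until absorption\<close>

definition path_dens :: "('s \<Rightarrow> 's pmf) \<Rightarrow> 's set \<Rightarrow> 's \<Rightarrow> 's list \<Rightarrow> real" where
  "path_dens P T u xs = (if xs \<noteq> [] \<and> hd xs = u then path_prob P T xs else 0)"

definition path_dens_upto :: "('s \<Rightarrow> 's pmf) \<Rightarrow> 's set \<Rightarrow> nat \<Rightarrow> 's \<Rightarrow> 's list \<Rightarrow> real" where
  "path_dens_upto P T n u xs = (if length xs \<le> Suc n then path_dens P T u xs else 0)"

definition path_mass :: "('s \<Rightarrow> 's pmf) \<Rightarrow> 's set \<Rightarrow> 's \<Rightarrow> ennreal" where
  "path_mass P T u = (\<integral>\<^sup>+ xs. ennreal (path_dens P T u xs) \<partial>count_space UNIV)"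

definition path_mass_upto :: "('s \<Rightarrow> 's pmf) \<Rightarrow> 's set \<Rightarrow> nat \<Rightarrow> 's \<Rightarrow> ennreal" where
  "path_mass_upto P T n u = (\<integral>\<^sup>+ xs. ennreal (path_dens_upto P T n u xs) \<partial>count_space UNIV)"

lemma path_prob_nonneg: "path_prob P T xs \<ge> 0"
  by (induction P T xs rule: path_prob.induct) auto

lemma path_dens_nonneg: "path_dens P T u xs \<ge> 0"
  by (simp add: path_dens_def path_prob_nonneg)

lemma path_dens_upto_nonneg: "path_dens_upto P T n u xs \<ge> 0"
  by (simp add: path_dens_upto_def path_dens_nonneg)

lemma path_dens_destination: "u \<in> T \<Longrightarrow> path_dens P T u xs = of_bool (xs = [u])"
  by (cases xs; cases "tl xs") (auto simp: path_dens_def)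

lemma path_dens_upto_destination: "u \<in> T \<Longrightarrow> path_dens_upto P T n u xs = of_bool (xs = [u])"
  by (auto simp: path_dens_upto_def path_dens_destination)

lemma path_dens_not_Cons: "(\<forall>ys. xs \<noteq> u # ys) \<Longrightarrow> path_dens P T u xs = 0"
  by (cases xs) (auto simp: path_dens_def)

lemma path_dens_upto_0: "u \<notin> T \<Longrightarrow> path_dens_upto P T 0 u xs = 0"
  by (cases xs; cases "tl xs") (auto simp: path_dens_upto_def path_dens_def)

lemma path_dens_Cons:
  assumes "u \<notin> T" "finite W" "set_pmf (P u) \<subseteq> W"
  shows "path_dens P T u (u # ys) = (\<Sum>w\<in>W. pmf (P u) w * path_dens P T w ys)"
proof (cases ys)
  case (Cons b zs)
  have "(\<Sum>w\<in>W. pmf (P u) w * path_dens P T w ys) =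
      (\<Sum>w\<in>W. if w = b then pmf (P u) b * path_prob P T ys else 0)"
    by (intro sum.cong) (auto simp: path_dens_def Cons)
  also have "\<dots> = (if b \<in> W then pmf (P u) b * path_prob P T ys else 0)"
    using assms by (simp add: sum.delta)
  also have "\<dots> = pmf (P u) b * path_prob P T ys"
    using assms by (auto simp: set_pmf_eq)
  finally show ?thesis
    using assms by (simp add: path_dens_def Cons)
qed (use assms in \<open>simp add: path_dens_def\<close>)

lemma path_dens_upto_Cons:
  assumes "u \<notin> T" "finite W" "set_pmf (P u) \<subseteq> W"
  shows "path_dens_upto P T (Suc n) u (u # ys) = (\<Sum>w\<in>W. pmf (P u) w * path_dens_upto P T n w ys)"
  using path_dens_Cons[where P=P and T=T and u=u, OF assms, of ys] by (simp add: path_dens_upto_def)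

lemma nn_integral_of_bool_eq: "(\<integral>\<^sup>+ xs. ennreal (of_bool (xs = a)) \<partial>count_space UNIV) = 1"
proof -
  have "(\<integral>\<^sup>+ xs. ennreal (of_bool (xs = a)) \<partial>count_space UNIV) =
      (\<integral>\<^sup>+ xs. indicator {a} xs \<partial>count_space UNIV)"
    by (intro nn_integral_cong) (auto simp: indicator_def)
  then show ?thesis by simp
qed

lemma path_mass_destination: "u \<in> T \<Longrightarrow> path_mass P T u = 1"
  unfolding path_mass_def path_dens_destination by (rule nn_integral_of_bool_eq)

lemma path_mass_upto_destination: "u \<in> T \<Longrightarrow> path_mass_upto P T n u = 1"
  unfolding path_mass_upto_def path_dens_upto_destination by (rule nn_integral_of_bool_eq)

lemma path_mass_upto_0: "u \<notin> T \<Longrightarrow> path_mass_upto P T 0 u = 0"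
  by (simp add: path_mass_upto_def path_dens_upto_0)

lemma path_mass_Cons:
  assumes "u \<notin> T" "finite W" "set_pmf (P u) \<subseteq> W"
  shows "path_mass P T u = (\<Sum>w\<in>W. ennreal (pmf (P u) w) * path_mass P T w)"
proof -
  have "path_mass P T u = (\<integral>\<^sup>+ ys. ennreal (path_dens P T u (u # ys)) \<partial>count_space UNIV)"
    unfolding path_mass_def by (rule nn_integral_count_space_Cons) (simp add: path_dens_not_Cons)
  also have "\<dots> = (\<integral>\<^sup>+ ys. (\<Sum>w\<in>W. ennreal (pmf (P u) w) * ennreal (path_dens P T w ys))
      \<partial>count_space UNIV)"
    by (intro nn_integral_cong) (simp add: path_dens_Cons[where P=P and T=T and u=u, OF assms] ennreal_mult path_dens_nonneg
        sum_ennreal[symmetric] del: sum_ennreal)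
  also have "\<dots> = (\<Sum>w\<in>W. ennreal (pmf (P u) w) * path_mass P T w)"
    by (simp add: nn_integral_sum nn_integral_cmult path_mass_def)
  finally show ?thesis .
qed

lemma path_mass_upto_Suc:
  assumes "u \<notin> T" "finite W" "set_pmf (P u) \<subseteq> W"
  shows "path_mass_upto P T (Suc n) u = (\<Sum>w\<in>W. ennreal (pmf (P u) w) * path_mass_upto P T n w)"
proof -
  have "path_mass_upto P T (Suc n) u =
      (\<integral>\<^sup>+ ys. ennreal (path_dens_upto P T (Suc n) u (u # ys)) \<partial>count_space UNIV)"
    unfolding path_mass_upto_def
    by (rule nn_integral_count_space_Cons) (simp add: path_dens_upto_def path_dens_not_Cons)
  also have "\<dots> = (\<integral>\<^sup>+ ys. (\<Sum>w\<in>W. ennreal (pmf (P u) w) * ennreal (path_dens_upto P T n w ys))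
      \<partial>count_space UNIV)"
    by (intro nn_integral_cong) (simp add: path_dens_upto_Cons[where P=P and T=T and u=u, OF assms] ennreal_mult
        path_dens_upto_nonneg sum_ennreal[symmetric] del: sum_ennreal)
  also have "\<dots> = (\<Sum>w\<in>W. ennreal (pmf (P u) w) * path_mass_upto P T n w)"
    by (simp add: nn_integral_sum nn_integral_cmult path_mass_upto_def)
  finally show ?thesis .
qed

lemma path_mass_SUP: "path_mass P T u = (SUP n. path_mass_upto P T n u)"
proof -
  have "incseq (\<lambda>n xs. ennreal (path_dens_upto P T n u xs))"
    by (auto simp: incseq_def le_fun_def path_dens_upto_def path_dens_nonneg)
  moreover have "(SUP n. ennreal (path_dens_upto P T n u xs)) = ennreal (path_dens P T u xs)" for xs
  proof (rule antisym)
    show "(SUP n. ennreal (path_dens_upto P T n u xs)) \<le> ennreal (path_dens P T u xs)"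
      by (intro SUP_least) (auto simp: path_dens_upto_def path_dens_nonneg)
    have "ennreal (path_dens P T u xs) = ennreal (path_dens_upto P T (length xs) u xs)"
      by (simp add: path_dens_upto_def)
    then show "ennreal (path_dens P T u xs) \<le> (SUP n. ennreal (path_dens_upto P T n u xs))"
      by (metis SUP_upper UNIV_I)
  qed
  ultimately show ?thesis
    unfolding path_mass_def path_mass_upto_def
    using nn_integral_monotone_convergence_SUP[of "\<lambda>n xs. ennreal (path_dens_upto P T n u xs)"
        "count_space UNIV"]
    by simp
qed

context markov_sys
begin

lemma path_mass_upto_le_1: "u \<in> V \<Longrightarrow> path_mass_upto P T n u \<le> 1"
proof (induction n arbitrary: u)
  case 0
  then show ?case by (cases "u \<in> T") (auto simp: path_mass_upto_destination path_mass_upto_0)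
next
  case (Suc n)
  show ?case
  proof (cases "u \<in> T")
    case False
    have "path_mass_upto P T (Suc n) u = (\<Sum>w\<in>set_pmf (P u). ennreal (pmf (P u) w) * path_mass_upto P T n w)"
      using False finite_set_pmf_P Suc.prems by (intro path_mass_upto_Suc) auto
    also have "\<dots> \<le> (\<Sum>w\<in>set_pmf (P u). ennreal (pmf (P u) w) * 1)"
      using Suc.IH P_closed Suc.prems by (intro sum_mono mult_left_mono) auto
    also have "\<dots> = 1"
      using finite_set_pmf_P[OF Suc.prems] by (simp add: sum_pmf_eq_1)
    finally show ?thesis .
  qed (simp add: path_mass_upto_destination)
qed

definition hit_prob :: "'s \<Rightarrow> real" where
  "hit_prob u = enn2real (path_mass P T u)"

lemma path_mass_le_1: "u \<in> V \<Longrightarrow> path_mass P T u \<le> 1"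
  unfolding path_mass_SUP by (intro SUP_least path_mass_upto_le_1)

lemma path_mass_eq_hit_prob: "u \<in> V \<Longrightarrow> path_mass P T u = ennreal (hit_prob u)"
  using path_mass_le_1[of u]
  by (auto simp: hit_prob_def ennreal_enn2real_if top_unique)

lemma hit_prob_le_1: "u \<in> V \<Longrightarrow> hit_prob u \<le> 1"
  using path_mass_le_1[of u] path_mass_eq_hit_prob[of u] by simp

lemma hit_prob_destination: "t \<in> T \<Longrightarrow> hit_prob t = 1"
  by (simp add: hit_prob_def path_mass_destination)

lemma hit_prob_step:
  assumes "u \<in> V" "u \<notin> T"
  shows "(\<Sum>w\<in>set_pmf (P u). pmf (P u) w * hit_prob w) = hit_prob u"
proof -
  have "ennreal (hit_prob u) = (\<Sum>w\<in>set_pmf (P u). ennreal (pmf (P u) w) * ennreal (hit_prob w))"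
    using path_mass_Cons[where P=P and T=T and u=u, OF assms(2) finite_set_pmf_P[OF assms(1)] order_refl] assms P_closed
    by (simp add: path_mass_eq_hit_prob subset_iff cong: sum.cong)
  also have "\<dots> = (\<Sum>w\<in>set_pmf (P u). ennreal (pmf (P u) w * hit_prob w))"
    by (intro sum.cong refl) (simp add: hit_prob_def ennreal_mult)
  also have "\<dots> = ennreal (\<Sum>w\<in>set_pmf (P u). pmf (P u) w * hit_prob w)"
    by (rule sum_ennreal) (simp add: hit_prob_def)
  finally show ?thesis
    by (simp add: hit_prob_def sum_nonneg)
qed

text \<open>
  This is where reachability of \<open>T\<close> enters: the set of states on which \<open>hit_prob\<close> attains its
  minimum is closed under transitions, so it contains a destination, where \<open>hit_prob\<close> is \<open>1\<close>.
\<close>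
lemma hit_prob_eq_1:
  assumes "u \<in> V"
  shows "hit_prob u = 1"
proof -
  define m where "m = Min (hit_prob ` V)"
  have m_le: "m \<le> hit_prob v" if "v \<in> V" for v
    using finite_V that by (simp add: m_def)
  have "m \<in> hit_prob ` V"
    unfolding m_def using finite_V assms by (intro Min_in) auto
  then obtain u0 where u0: "u0 \<in> V" "hit_prob u0 = m" by auto
  have "m \<ge> 1"
  proof (rule ccontr)
    assume m1: "\<not> m \<ge> 1"
    define A where "A = {v \<in> V. hit_prob v = m}"
    have "(u0, t) \<in> {(a, b). b \<in> set_pmf (P a)}\<^sup>* \<Longrightarrow> t \<in> A" for t
    proof (induction rule: rtrancl_induct)
      case (step v w)
      then have v: "v \<in> V" "v \<notin> T" "hit_prob v = m"
        using m1 hit_prob_destination by (auto simp: A_def)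
      have "hit_prob w = m"
      proof (rule pmf_average_eq_min[OF finite_set_pmf_P[OF v(1)]])
        show "m \<le> hit_prob x" if "x \<in> set_pmf (P v)" for x
          using P_closed[OF v(1)] that by (intro m_le) auto
      qed (use step(2) hit_prob_step[OF v(1,2)] v(3) in auto)
      then show ?case
        using P_closed[OF v(1)] step(2) by (auto simp: A_def)
    qed (use u0 in \<open>simp add: A_def\<close>)
    moreover obtain t where "t \<in> T" "(u0, t) \<in> {(a, b). b \<in> set_pmf (P a)}\<^sup>*"
      using reaches_T[OF u0(1)] by blast
    ultimately show False
      using hit_prob_destination m1 by (force simp: A_def)
  qed
  then show ?thesis
    using m_le[OF assms] hit_prob_le_1[OF assms] by simp
qed

lemma pmf_traj: "u \<in> V \<Longrightarrow> pmf (traj P T u) xs = path_dens P T u xs"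
proof -
  assume u: "u \<in> V"
  have "path_mass P T u = 1"
    using path_mass_eq_hit_prob[OF u] hit_prob_eq_1[OF u] by simp
  moreover have "traj P T u = embed_pmf (path_dens P T u)"
    by (simp add: traj_def path_dens_def[abs_def])
  ultimately show ?thesis
    by (auto intro: pmf_embed_pmf simp: path_dens_nonneg path_mass_def)
qed

lemma traj_destination: "t \<in> T \<Longrightarrow> traj P T t = return_pmf [t]"
  using T_subset_V by (intro pmf_eqI) (auto simp: pmf_traj path_dens_destination indicator_def)

lemma set_pmf_traj: "u \<in> V \<Longrightarrow> xs \<in> set_pmf (traj P T u) \<Longrightarrow> xs \<noteq> [] \<and> hd xs = u"
  by (auto simp: set_pmf_iff pmf_traj path_dens_def split: if_splits)

lemma path_prob_subset_V:
  "path_prob P T xs \<noteq> 0 \<Longrightarrow> xs \<noteq> [] \<Longrightarrow> hd xs \<in> V \<Longrightarrow> set xs \<subseteq> V"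
proof (induction xs)
  case (Cons u xs)
  show ?case
  proof (cases xs)
    case (Cons v ys)
    with Cons.prems have "v \<in> set_pmf (P u)" "path_prob P T xs \<noteq> 0"
      by (auto simp: set_pmf_iff split: if_splits)
    with Cons.IH Cons.prems \<open>xs = v # ys\<close> P_closed show ?thesis by auto
  qed (use Cons.prems in simp)
qed simp

lemma set_pmf_traj_subset_V: "u \<in> V \<Longrightarrow> xs \<in> set_pmf (traj P T u) \<Longrightarrow> set xs \<subseteq> V"
  using path_prob_subset_V[of xs] by (auto simp: set_pmf_iff pmf_traj path_dens_def split: if_splits)

lemma traj_step:
  assumes u: "u \<in> V" "u \<notin> T"
  shows "traj P T u = bind_pmf (P u) (\<lambda>w. map_pmf (Cons u) (traj P T w))"
proof (rule pmf_eqI)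
  fix xs
  have inj: "inj (Cons u)"
    by (auto simp: inj_def)
  show "pmf (traj P T u) xs = pmf (bind_pmf (P u) (\<lambda>w. map_pmf (Cons u) (traj P T w))) xs"
  proof (cases "\<exists>ys. xs = u # ys")
    case False
    then have "pmf (map_pmf (Cons u) (traj P T w)) xs = 0" for w
      by (intro pmf_map_outside) auto
    then show ?thesis
      using False u by (simp add: pmf_bind pmf_traj path_dens_not_Cons)
  next
    case True
    then obtain ys where xs: "xs = u # ys" by auto
    have "pmf (bind_pmf (P u) (\<lambda>w. map_pmf (Cons u) (traj P T w))) xs =
        measure_pmf.expectation (P u) (\<lambda>w. pmf (traj P T w) ys)"
      by (simp add: pmf_bind xs pmf_map_inj'[OF inj])
    also have "\<dots> = (\<Sum>w\<in>set_pmf (P u). pmf (traj P T w) ys * pmf (P u) w)"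
      using finite_set_pmf_P[OF u(1)] by (intro integral_measure_pmf_real) auto
    also have "\<dots> = (\<Sum>w\<in>set_pmf (P u). pmf (P u) w * path_dens P T w ys)"
    proof (intro sum.cong refl)
      fix w assume "w \<in> set_pmf (P u)"
      then have "w \<in> V" using P_closed u by blast
      then show "pmf (traj P T w) ys * pmf (P u) w = pmf (P u) w * path_dens P T w ys"
        by (simp add: pmf_traj)
    qed
    also have "\<dots> = path_dens P T u xs"
      using path_dens_Cons[where P=P and T=T and u=u, OF u(2) finite_set_pmf_P[OF u(1)] order_refl] xs
      by simp
    finally show ?thesis
      using u by (simp add: pmf_traj)
  qed
qed

end

section \<open>A potential function for the MPOI game\<close>

locale mpoi_system =
  fixes J :: "'j set" and F :: "'j set set" and hf :: "'j set \<Rightarrow> real"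
    and V :: "'j \<Rightarrow> 's set" and P :: "'j \<Rightarrow> 's \<Rightarrow> 's pmf" and s :: "'j \<Rightarrow> 's"
    and T :: "'j \<Rightarrow> 's set" and pr :: "'j \<Rightarrow> 's \<Rightarrow> real" and r :: "'j \<Rightarrow> 's \<Rightarrow> real"
  assumes finite_J: "finite J"
    and F_subset: "F \<subseteq> Pow J" and F_nonempty: "F \<noteq> {}"
    and F_down_closed: "\<forall>A\<in>F. \<forall>B. B \<subseteq> A \<longrightarrow> B \<in> F"
    and markov_systems: "\<forall>i\<in>J. markov_system (V i) (P i) (s i) (T i) (pr i) (r i)"
begin

abbreviation gr :: "'j \<Rightarrow> 's \<Rightarrow> real" where
  "gr i v \<equiv> grade (P i) (T i) (pr i) (r i) v"

abbreviation Upen :: "'j \<Rightarrow> 's \<Rightarrow> real \<Rightarrow> real" where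
  "Upen i v \<tau> \<equiv> pen_opt (P i) (T i) (pr i) (r i) v \<tau>"

abbreviation Y :: "'j \<Rightarrow> 's list \<Rightarrow> real" where
  "Y i xs \<equiv> prevailing_cost (P i) (T i) (pr i) (r i) xs"

lemma markov_sys_component: "i \<in> J \<Longrightarrow> markov_sys (V i) (P i) (T i) (pr i)"
  using markov_systems unfolding markov_system_def markov_sys_def by blast

lemma start_in_V: "i \<in> J \<Longrightarrow> s i \<in> V i"
  using markov_systems unfolding markov_system_def by blast

lemma finite_F: "finite F"
  using F_subset finite_J by (meson finite_Pow_iff finite_subset)

lemma empty_in_F: "{} \<in> F"
  using F_nonempty F_down_closed by blast

definition grade_lb :: real where
  "grade_lb = Min (\<Union>j\<in>J. gr j ` V j)"

definition grade_ub :: real where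
  "grade_ub = Max (\<Union>j\<in>J. gr j ` V j)"

text \<open>
  Clamping to the range of all grades is the identity wherever it is applied below; it only
  serves to make the integrand uniformly bounded, hence integrable.
\<close>
definition clamp_grades :: "real \<Rightarrow> real" where
  "clamp_grades x = max grade_lb (min grade_ub x)"

definition best_value :: "('j \<Rightarrow> real) \<Rightarrow> real" where
  "best_value y = Max ((\<lambda>I. (\<Sum>i\<in>I. y i) + hf I) ` F)"

definition capped_best :: "('j \<Rightarrow> real) \<Rightarrow> ('j \<Rightarrow> 's list) \<Rightarrow> real" where
  "capped_best \<kappa> \<sigma> = best_value (\<lambda>j. clamp_grades (min (\<kappa> j) (Y j (\<sigma> j))))"

definition expected_capped_best :: "('j \<Rightarrow> 's) \<Rightarrow> ('j \<Rightarrow> real) \<Rightarrow> real" where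
  "expected_capped_best u \<kappa> =
     measure_pmf.expectation (Pi_pmf J [] (\<lambda>j. traj (P j) (T j) (u j))) (capped_best \<kappa>)"

definition potential :: "('j \<Rightarrow> 's) \<Rightarrow> ('j \<Rightarrow> real) \<Rightarrow> real" where
  "potential u \<kappa> = expected_capped_best u \<kappa> + (\<Sum>j\<in>J. Upen j (u j) (\<kappa> j))"

definition admissible :: "('j \<Rightarrow> 's) \<Rightarrow> ('j \<Rightarrow> real) \<Rightarrow> bool" where
  "admissible u \<kappa> \<longleftrightarrow> (\<forall>j\<in>J. u j \<in> V j \<and> grade_lb \<le> \<kappa> j \<and> \<kappa> j \<le> gr j (u j))"

lemma grade_bounds:
  assumes "j \<in> J" "v \<in> V j"
  shows "grade_lb \<le> gr j v" "gr j v \<le> grade_ub"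
proof -
  have "finite (\<Union>j\<in>J. gr j ` V j)"
    using finite_J markov_sys.finite_V[OF markov_sys_component] by auto
  then show "grade_lb \<le> gr j v" "gr j v \<le> grade_ub"
    unfolding grade_lb_def grade_ub_def using assms by (auto intro: Min_le Max_ge)
qed

lemma clamp_grades_id: "grade_lb \<le> x \<Longrightarrow> x \<le> grade_ub \<Longrightarrow> clamp_grades x = x"
  by (simp add: clamp_grades_def)

lemma best_value_ge: "I \<in> F \<Longrightarrow> (\<Sum>i\<in>I. y i) + hf I \<le> best_value y"
  unfolding best_value_def using finite_F by (intro Max_ge) auto

lemma best_value_cong: "(\<And>j. j \<in> J \<Longrightarrow> y j = y' j) \<Longrightarrow> best_value y = best_value y'"
proof -
  assume "\<And>j. j \<in> J \<Longrightarrow> y j = y' j"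
  then have "(\<lambda>I. (\<Sum>i\<in>I. y i) + hf I) ` F = (\<lambda>I. (\<Sum>i\<in>I. y' i) + hf I) ` F"
    using F_subset by (intro image_cong refl) (auto intro!: sum.cong)
  then show ?thesis by (simp add: best_value_def)
qed

lemma best_value_abs_le:
  assumes "\<And>j. j \<in> J \<Longrightarrow> \<bar>y j\<bar> \<le> C"
  shows "\<bar>best_value y\<bar> \<le> real (card J) * C + (\<Sum>I\<in>F. \<bar>hf I\<bar>)"
proof -
  have "best_value y \<in> (\<lambda>I. (\<Sum>i\<in>I. y i) + hf I) ` F"
    unfolding best_value_def using finite_F F_nonempty by (intro Max_in) auto
  then obtain I where I: "I \<in> F" "best_value y = (\<Sum>i\<in>I. y i) + hf I" by auto
  have "\<bar>best_value y\<bar> \<le> (\<Sum>i\<in>I. \<bar>y i\<bar>) + \<bar>hf I\<bar>"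
    using I by (simp add: order_trans[OF abs_triangle_ineq] add_mono sum_abs)
  also have "(\<Sum>i\<in>I. \<bar>y i\<bar>) \<le> (\<Sum>i\<in>J. \<bar>y i\<bar>)"
    using I F_subset finite_J by (intro sum_mono2) auto
  also have "\<dots> \<le> (\<Sum>i\<in>J. C)"
    using assms by (intro sum_mono) auto
  also have "\<bar>hf I\<bar> \<le> (\<Sum>I\<in>F. \<bar>hf I\<bar>)"
    using I finite_F by (intro member_le_sum) auto
  finally show ?thesis by simp
qed

lemma capped_best_abs_le:
  "\<bar>capped_best \<kappa> \<sigma>\<bar> \<le> real (card J) * (\<bar>grade_lb\<bar> + \<bar>grade_ub\<bar>) + (\<Sum>I\<in>F. \<bar>hf I\<bar>)"
  unfolding capped_best_def by (rule best_value_abs_le) (simp add: clamp_grades_def)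

lemma prevailing_cost_Cons: "ys \<noteq> [] \<Longrightarrow> Y i (u # ys) = min (gr i u) (Y i ys)"
  unfolding prevailing_cost_def by (simp add: Min_insert)

lemma prevailing_cost_le: "v \<in> set xs \<Longrightarrow> Y i xs \<le> gr i v"
  unfolding prevailing_cost_def by (intro Min_le) auto

lemma prevailing_cost_bounds:
  assumes "i \<in> J" "xs \<noteq> []" "set xs \<subseteq> V i"
  shows "grade_lb \<le> Y i xs" "Y i xs \<le> grade_ub"
proof -
  have "Y i xs \<in> gr i ` set xs"
    unfolding prevailing_cost_def using assms by (intro Min_in) auto
  then show "grade_lb \<le> Y i xs" "Y i xs \<le> grade_ub"
    using grade_bounds assms by auto
qed

lemma capped_best_Cons:
  assumes "\<kappa> i \<le> gr i z" "ys \<noteq> []" "hd ys = w"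
  shows "capped_best \<kappa> (f(i := z # ys)) = capped_best (\<kappa>(i := min (\<kappa> i) (gr i w))) (f(i := ys))"
proof -
  have "Y i ys \<le> gr i w"
    using assms by (intro prevailing_cost_le) auto
  then have "min (\<kappa> i) (Y i (z # ys)) = min (min (\<kappa> i) (gr i w)) (Y i ys)"
    using assms by (auto simp: prevailing_cost_Cons min_def)
  then show ?thesis
    unfolding capped_best_def by (intro arg_cong[where f=best_value] ext) auto
qed

lemma expected_capped_best_step:
  assumes i: "i \<in> J" and adm: "admissible u \<kappa>" and uT: "u i \<notin> T i"
  shows "expected_capped_best u \<kappa> = measure_pmf.expectation (P i (u i))
           (\<lambda>w. expected_capped_best (u(i := w)) (\<kappa>(i := min (\<kappa> i) (gr i w))))"
proof -
  interpret markov_sys "V i" "P i" "T i" "pr i" "r i"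
    using i by (rule markov_sys_component)
  define Q where "Q = Pi_pmf (J - {i}) [] (\<lambda>j. traj (P j) (T j) (u j))"
  let ?H = "\<lambda>\<kappa> y. measure_pmf.expectation Q (\<lambda>f. capped_best \<kappa> (f(i := y)))"
  have uV: "u i \<in> V i" and ku: "\<kappa> i \<le> gr i (u i)"
    using adm i by (auto simp: admissible_def)
  have split: "expected_capped_best u' \<kappa>' = measure_pmf.expectation (traj (P i) (T i) (u' i)) (?H \<kappa>')"
    if "\<And>j. j \<noteq> i \<Longrightarrow> u' j = u j" for u' \<kappa>'
  proof -
    have "Pi_pmf (J - {i}) [] (\<lambda>j. traj (P j) (T j) (u' j)) = Q"
      unfolding Q_def using that by (intro Pi_pmf_cong) auto
    then show ?thesis
      unfolding expected_capped_best_def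
      by (subst pmf_expectation_Pi_pmf_remove[OF finite_J i capped_best_abs_le]) simp
  qed
  have "expected_capped_best u \<kappa> = measure_pmf.expectation (P i (u i))
      (\<lambda>w. measure_pmf.expectation (traj (P i) (T i) w) (\<lambda>ys. ?H \<kappa> (u i # ys)))"
    unfolding split[OF refl] traj_step[OF uV uT]
    by (subst pmf_expectation_bind_bounded[OF pmf_expectation_abs_le[OF capped_best_abs_le]]) simp
  also have "\<dots> = measure_pmf.expectation (P i (u i))
      (\<lambda>w. expected_capped_best (u(i := w)) (\<kappa>(i := min (\<kappa> i) (gr i w))))"
  proof (intro integral_cong_AE, simp_all add: AE_measure_pmf_iff, intro ballI)
    fix w assume "w \<in> set_pmf (P i (u i))"
    then have wV: "w \<in> V i"
      using P_closed[OF uV] by blast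
    have "?H \<kappa> (u i # ys) = ?H (\<kappa>(i := min (\<kappa> i) (gr i w))) ys"
      if "ys \<in> set_pmf (traj (P i) (T i) w)" for ys
      using capped_best_Cons[where \<kappa>=\<kappa> and i=i and z="u i", OF ku] set_pmf_traj[OF wV that] by simp
    then show "measure_pmf.expectation (traj (P i) (T i) w) (\<lambda>ys. ?H \<kappa> (u i # ys)) =
        expected_capped_best (u(i := w)) (\<kappa>(i := min (\<kappa> i) (gr i w)))"
      by (subst split) (auto intro: integral_cong_AE simp: AE_measure_pmf_iff)
  qed
  finally show ?thesis .
qed

lemma admissible_advance:
  assumes "admissible u \<kappa>" "i \<in> J" "w \<in> set_pmf (P i (u i))"
  shows "admissible (u(i := w)) (\<kappa>(i := min (\<kappa> i) (gr i w)))"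
proof -
  have "w \<in> V i"
    using assms markov_sys.P_closed[OF markov_sys_component] by (auto simp: admissible_def)
  then show ?thesis
    using assms grade_bounds by (auto simp: admissible_def)
qed

lemma potential_advance:
  assumes i: "i \<in> J" and adm: "admissible u \<kappa>" and uT: "u i \<notin> T i"
    and x: "\<And>w. w \<in> set_pmf (P i (u i)) \<Longrightarrow>
      x w \<le> potential (u(i := w)) (\<kappa>(i := min (\<kappa> i) (gr i w)))"
  shows "- pr i (u i) + measure_pmf.expectation (P i (u i)) x \<le> potential u \<kappa>"
proof -
  interpret markov_sys "V i" "P i" "T i" "pr i" "r i"
    using i by (rule markov_sys_component)
  have uV: "u i \<in> V i"
    using adm i by (auto simp: admissible_def)
  have fin: "finite (set_pmf (P i (u i)))"
    using uV by (rule finite_set_pmf_P)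
  define R where "R = (\<Sum>j\<in>J - {i}. Upen j (u j) (\<kappa> j))"
  have sum_split: "(\<Sum>j\<in>J. Upen j (u' j) (\<kappa>' j)) = Upen i (u' i) (\<kappa>' i) + R"
    if "\<And>j. j \<noteq> i \<Longrightarrow> u' j = u j \<and> \<kappa>' j = \<kappa> j" for u' \<kappa>'
    using finite_J i that unfolding R_def by (subst sum.remove) (auto intro!: sum.cong)
  have "measure_pmf.expectation (P i (u i)) x \<le> measure_pmf.expectation (P i (u i))
      (\<lambda>w. potential (u(i := w)) (\<kappa>(i := min (\<kappa> i) (gr i w))))"
    using fin x by (rule pmf_expectation_mono_finite)
  also have "\<dots> = measure_pmf.expectation (P i (u i))
        (\<lambda>w. expected_capped_best (u(i := w)) (\<kappa>(i := min (\<kappa> i) (gr i w))))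
      + measure_pmf.expectation (P i (u i)) (\<lambda>w. Upen i w (min (\<kappa> i) (gr i w))) + R"
    unfolding potential_def using fin by (subst sum_split) (auto simp: pmf_expectation_add_finite)
  also have "\<dots> = expected_capped_best u \<kappa>
      + measure_pmf.expectation (P i (u i)) (\<lambda>w. Upen i w (min (\<kappa> i) (gr i w))) + R"
    using expected_capped_best_step[OF i adm uT] by simp
  finally show ?thesis
    using pen_opt_bellman_grade[OF uV uT, of "\<kappa> i"] sum_split[of u \<kappa>]
    by (simp add: potential_def)
qed

lemma capped_best_ready:
  assumes adm: "admissible u \<kappa>" and I: "I \<in> F" and ready: "\<forall>i\<in>I. u i \<in> T i"
    and \<sigma>: "\<sigma> \<in> set_pmf (Pi_pmf J [] (\<lambda>j. traj (P j) (T j) (u j)))"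
  shows "(\<Sum>i\<in>I. \<kappa> i) + hf I \<le> capped_best \<kappa> \<sigma>"
proof -
  have "clamp_grades (min (\<kappa> i) (Y i (\<sigma> i))) = \<kappa> i" if i: "i \<in> I" for i
  proof -
    have iJ: "i \<in> J"
      using i I F_subset by auto
    have "\<sigma> i \<in> set_pmf (traj (P i) (T i) (u i))"
      using set_Pi_pmf_memberD[OF finite_J \<sigma> iJ] by simp
    then have "\<sigma> i = [u i]"
      using markov_sys.traj_destination[OF markov_sys_component[OF iJ]] ready i by simp
    moreover have "u i \<in> V i" "grade_lb \<le> \<kappa> i" "\<kappa> i \<le> gr i (u i)"
      using adm iJ by (auto simp: admissible_def)
    ultimately show ?thesis
      using grade_bounds[OF iJ, of "u i"] by (simp add: prevailing_cost_def clamp_grades_def)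
  qed
  then have "(\<Sum>i\<in>I. \<kappa> i) + hf I = (\<Sum>i\<in>I. clamp_grades (min (\<kappa> i) (Y i (\<sigma> i)))) + hf I"
    by simp
  also have "\<dots> \<le> capped_best \<kappa> \<sigma>"
    unfolding capped_best_def by (rule best_value_ge[OF I])
  finally show ?thesis .
qed

lemma select_le_potential:
  assumes adm: "admissible u \<kappa>" and I: "I \<in> F" and ready: "\<forall>i\<in>I. u i \<in> T i"
  shows "(\<Sum>i\<in>I. r i (u i)) + hf I \<le> potential u \<kappa>"
proof -
  let ?M = "Pi_pmf J [] (\<lambda>j. traj (P j) (T j) (u j))"
  have IJ: "I \<subseteq> J"
    using I F_subset by auto
  have "measure_pmf.expectation ?M (\<lambda>_. (\<Sum>i\<in>I. \<kappa> i) + hf I)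
      \<le> measure_pmf.expectation ?M (capped_best \<kappa>)"
    by (intro integral_mono_AE measure_pmf.integrable_const
        integrable_measure_pmf_bounded[OF capped_best_abs_le])
      (simp add: AE_measure_pmf_iff capped_best_ready[OF adm I ready])
  then have "(\<Sum>i\<in>I. \<kappa> i) + hf I \<le> expected_capped_best u \<kappa>"
    by (simp add: expected_capped_best_def)
  moreover have "(\<Sum>i\<in>I. r i (u i) - \<kappa> i) \<le> (\<Sum>i\<in>I. Upen i (u i) (\<kappa> i))"
    using IJ ready by (intro sum_mono markov_sys.pen_opt_destination[OF markov_sys_component]) auto
  moreover have "(\<Sum>i\<in>I. Upen i (u i) (\<kappa> i)) \<le> (\<Sum>j\<in>J. Upen j (u j) (\<kappa> j))"
    using IJ finite_J adm
    by (intro sum_mono2 markov_sys.pen_opt_nonneg[OF markov_sys_component]) (auto simp: admissible_def)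
  ultimately show ?thesis
    by (simp add: potential_def sum_subtractf)
qed

lemma util_le_potential:
  "mpoi_valid J F P T \<sigma> n h \<Longrightarrow> h \<noteq> [] \<Longrightarrow> admissible (last h) \<kappa> \<Longrightarrow>
   mpoi_util hf P pr r \<sigma> n h \<le> potential (last h) \<kappa>"
proof (induction n arbitrary: h \<kappa>)
  case 0
  then show ?case
    using select_le_potential by (auto split: action.splits)
next
  case (Suc n)
  show ?case
  proof (cases "\<sigma> h")
    case (Select I)
    then show ?thesis
      using Suc.prems select_le_potential by auto
  next
    case (Advance i)
    with Suc.prems have i: "i \<in> J" and uT: "last h i \<notin> T i"
      and valid: "\<And>w. w \<in> set_pmf (P i (last h i)) \<Longrightarrow>
        mpoi_valid J F P T \<sigma> n (h @ [(last h)(i := w)])"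
      by auto
    have "mpoi_util hf P pr r \<sigma> n (h @ [(last h)(i := w)])
        \<le> potential ((last h)(i := w)) (\<kappa>(i := min (\<kappa> i) (gr i w)))"
      if "w \<in> set_pmf (P i (last h i))" for w
    proof -
      have "admissible (last (h @ [(last h)(i := w)])) (\<kappa>(i := min (\<kappa> i) (gr i w)))"
        unfolding last_snoc by (rule admissible_advance[OF Suc.prems(3) i that])
      from Suc.IH[OF valid[OF that] _ this] show ?thesis
        by (simp only: last_snoc snoc_eq_iff_butlast simp_thms)
    qed
    then have "- pr i (last h i) + measure_pmf.expectation (P i (last h i))
        (\<lambda>w. mpoi_util hf P pr r \<sigma> n (h @ [(last h)(i := w)])) \<le> potential (last h) \<kappa>"
      by (rule potential_advance[OF i Suc.prems(3) uT])
    then show ?thesis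
      using Advance by simp
  qed
qed

lemma expected_capped_best_start:
  "expected_capped_best s (\<lambda>j. gr j (s j)) =
   measure_pmf.expectation (Pi_pmf J [] (\<lambda>j. traj (P j) (T j) (s j))) (\<lambda>\<sigma>. best_value (\<lambda>j. Y j (\<sigma> j)))"
  unfolding expected_capped_best_def
proof (intro integral_cong_AE, simp_all add: AE_measure_pmf_iff, intro ballI)
  fix \<sigma> assume \<sigma>: "\<sigma> \<in> set_pmf (Pi_pmf J [] (\<lambda>j. traj (P j) (T j) (s j)))"
  show "capped_best (\<lambda>j. gr j (s j)) \<sigma> = best_value (\<lambda>j. Y j (\<sigma> j))"
    unfolding capped_best_def
  proof (rule best_value_cong)
    fix j assume j: "j \<in> J"
    interpret markov_sys "V j" "P j" "T j" "pr j" "r j"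
      using j by (rule markov_sys_component)
    have traj: "\<sigma> j \<in> set_pmf (traj (P j) (T j) (s j))"
      using set_Pi_pmf_memberD[OF finite_J \<sigma> j] by simp
    then have "\<sigma> j \<noteq> []" "hd (\<sigma> j) = s j"
      using set_pmf_traj[OF start_in_V[OF j]] by auto
    then have "Y j (\<sigma> j) \<le> gr j (s j)"
      by (intro prevailing_cost_le) (metis hd_in_set)
    moreover have "grade_lb \<le> Y j (\<sigma> j)" "Y j (\<sigma> j) \<le> grade_ub"
      using prevailing_cost_bounds[OF j \<open>\<sigma> j \<noteq> []\<close> set_pmf_traj_subset_V[OF start_in_V[OF j] traj]]
      by auto
    ultimately show "clamp_grades (min (gr j (s j)) (Y j (\<sigma> j))) = Y j (\<sigma> j)"
      by (simp add: clamp_grades_id min_def)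
  qed
qed

end

theorem lemma1:
  fixes J :: "'j set" and F :: "'j set set" and hf :: "'j set \<Rightarrow> real"
    and V :: "'j \<Rightarrow> 's set" and P :: "'j \<Rightarrow> 's \<Rightarrow> 's pmf" and s :: "'j \<Rightarrow> 's"
    and T :: "'j \<Rightarrow> 's set" and pr :: "'j \<Rightarrow> 's \<Rightarrow> real" and r :: "'j \<Rightarrow> 's \<Rightarrow> real"
  assumes "finite J"
    and "F \<subseteq> Pow J" and "F \<noteq> {}"
    and "\<forall>A\<in>F. \<forall>B. B \<subseteq> A \<longrightarrow> B \<in> F"
    and "\<forall>i\<in>J. markov_system (V i) (P i) (s i) (T i) (pr i) (r i)"
    and "\<forall>i\<in>J. \<forall>t\<in>T i. r i t \<ge> 0"
  shows "mpoi_opt J F hf P s T pr r \<le>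
    measure_pmf.expectation (Pi_pmf J [] (\<lambda>i. traj (P i) (T i) (s i)))
      (\<lambda>\<sigma>. Max ((\<lambda>I. (\<Sum>i\<in>I. prevailing_cost (P i) (T i) (pr i) (r i) (\<sigma> i)) + hf I) ` F))"
proof -
  interpret mpoi_system J F hf V P s T pr r
    using assms(1-5) by unfold_locales
  define \<tau>s where "\<tau>s j = gr j (s j)" for j
  have "admissible s \<tau>s"
    using start_in_V grade_bounds by (auto simp: admissible_def \<tau>s_def)
  moreover have "potential s \<tau>s \<le> expected_capped_best s \<tau>s"
    using markov_sys.pen_opt_grade_nonpos[OF markov_sys_component start_in_V]
    by (simp add: potential_def \<tau>s_def sum_nonpos)
  ultimately have "mpoi_util hf P pr r \<sigma> n [s] \<le> expected_capped_best s \<tau>s"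
    if "mpoi_valid J F P T \<sigma> n [s]" for \<sigma> n
    using util_le_potential[OF that] by fastforce
  moreover have "{mpoi_util hf P pr r \<sigma> n [s] | \<sigma> n. mpoi_valid J F P T \<sigma> n [s]} \<noteq> {}"
    using empty_in_F by (auto intro!: exI[of _ "\<lambda>_. Select {}"] exI[of _ 0])
  ultimately show ?thesis
    unfolding mpoi_opt_def \<tau>s_def expected_capped_best_start
    by (intro cSup_least) (auto simp: best_value_def)
qed

end
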